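(* Let $\mathbb{V}=(V,S)$ be a finite hypergraph with intersection graph $\mathbb{I}=(S,E)$, let $\mathbb{G}$ be an $E$-group compatible with $\mathbb{I}$, and let $\hat{\mathbb{V}}=(\hat V,\hat S)$ and $\pi$ be as defined in the context. Then $\pi:\hat V\to V$ is well defined and maps every hyperedge $[s,g]\in\hat S$ bijectively onto $s$. Moreover, if $N\ge3$ and $\mathbb{G}$ is $N$-acyclic over $\mathbb{I}$, then (a) the Gaifman graph of $\hat{\mathbb{V}}$ has no chordless cycle of length $n$ with $4\le n\le N$, and (b) every set of at most $N$ vertices of $\hat V$ that are pairwise adjacent in the Gaifman graph is contained in a single hyperedge of $\hat S$; i.e. every induced sub-hypergraph of $\hat{\mathbb{V}}$ on at most $N$ vertices is acyclic (chordal and conformal).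
   Context: A finite hypergraph $(V,S)$ has finite vertex set $V$ and set of hyperedges $S\subseteq\mathcal{P}(V)$. Its intersection graph has vertex set $S$ and edge set $E=\{\{s,s'\}: s\neq s',\ s\cap s'\neq\emptyset\}$, regarded as the $E$-graph $\mathbb{I}=(S,(R_e)_{e\in E})$ with $R_e=\{(s,s'),(s',s)\}$ for $e=\{s,s'\}$. An $E$-group is a group $\mathbb{G}$ with $E\subseteq\mathbb{G}$ generating it and each $e\in E$ satisfying $e\neq1$, $e^2=1$; $[e_1\cdots e_n]_{\mathbb{G}}=e_1\cdots e_n$. For an $E$-graph $(X,(R_e))$ (each $R_e$ symmetric, each vertex with at most one $R_e$-neighbour), $\pi_e$ swaps $R_e$-neighbours and fixes all other vertices, $\pi_{e_1\cdots e_n}=\pi_{e_n}\circ\cdots\circ\pi_{e_1}$; $\mathbb{G}$ is compatible with it if $[w]_{\mathbb{G}}=1$ implies $\pi_w=\mathrm{id}$. For $\alpha\subseteq E$, $s,t\in S$, $\alpha^*[\mathbb{I},s]$ is the set of $w=e_1\cdots e_n\in\alpha^*$ labelling a walk in $\mathbb{I}$ from $s$, $\alpha^*[\mathbb{I},s,t]$ those ending at $t$; $C[\mathbb{I},\alpha,s;g]=\{g[w]_{\mathbb{G}}:w\in\alpha^*[\mathbb{I},s]\}$. An $\mathbb{I}$-coset cycle of length $n\ge2$ is $(g_i,\alpha_i,s_i)_{i\in\mathbb{Z}_n}$, $\alpha_i\subsetneq E$, $s_i\in S$, with $g_{i+1}=g_i[w]_{\mathbb{G}}$ for some $w\in\alpha_i^*[\mathbb{I},s_i,s_{i+1}]$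 and $C[\mathbb{I},\alpha_i\cap\alpha_{i-1},s_i;g_i]\cap C[\mathbb{I},\alpha_i\cap\alpha_{i+1},s_{i+1};g_{i+1}]=\emptyset$; $\mathbb{G}$ is $N$-acyclic over $\mathbb{I}$ if there is no $\mathbb{I}$-coset cycle of length $2,\dots,N$. Covering: let $X=\{(v,s,g): s\in S,\ v\in s,\ g\in\mathbb{G}\}$ and let $\approx$ be the equivalence relation on $X$ generated by $(v,s,g)\approx(v,s',ge)$ for all $e=\{s,s'\}\in E$ with $v\in s\cap s'$. Put $\hat V=X/{\approx}$, $[s,g]=\{[(v,s,g)]: v\in s\}$, $\hat S=\{[s,g]: s\in S, g\in\mathbb{G}\}$, $\hat{\mathbb{V}}=(\hat V,\hat S)$ and $\pi([(v,s,g)])=v$. The Gaifman graph of a hypergraph joins two distinct vertices iff they lie in a common hyperedge; a chordless cycle of length $n$ is a sequence of $n$ distinct vertices in which consecutive ones (cyclically) are adjacent and no non-consecutive ones are adjacent. *)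

theory Defs
  imports "HOL-Algebra.Generated_Groups"
begin

definition inter_edges :: "'v set set \<Rightarrow> 'v set set set" where
  "inter_edges S = {{s, s'} | s s'. s \<in> S \<and> s' \<in> S \<and> s \<noteq> s' \<and> s \<inter> s' \<noteq> {}}"

text \<open>E is identified with a subset of the group via the injective map emb.\<close>
definition E_group :: "('g, 'b) monoid_scheme \<Rightarrow> 'e set \<Rightarrow> ('e \<Rightarrow> 'g) \<Rightarrow> bool" where
  "E_group G E emb \<longleftrightarrow> group G \<and> inj_on emb E \<and> emb ` E \<subseteq> carrier G
     \<and> generate G (emb ` E) = carrier G
     \<and> (\<forall>e\<in>E. emb e \<noteq> \<one>\<^bsub>G\<^esub> \<and> emb e \<otimes>\<^bsub>G\<^esub> emb e = \<one>\<^bsub>G\<^esub>)"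

definition word_val :: "('g, 'b) monoid_scheme \<Rightarrow> ('e \<Rightarrow> 'g) \<Rightarrow> 'e list \<Rightarrow> 'g" where
  "word_val G emb w = foldr (\<lambda>e a. emb e \<otimes>\<^bsub>G\<^esub> a) w \<one>\<^bsub>G\<^esub>"

definition swap_edge :: "'a set \<Rightarrow> 'a \<Rightarrow> 'a" where
  "swap_edge e x = (if x \<in> e then (THE y. e = {x, y}) else x)"

text \<open>pi_{e1...en} = pi_en o ... o pi_e1\<close>
definition pi_word :: "'a set list \<Rightarrow> 'a \<Rightarrow> 'a" where
  "pi_word w = fold swap_edge w"

definition compatible :: "('g, 'b) monoid_scheme \<Rightarrow> ('v set set \<Rightarrow> 'g) \<Rightarrow> 'v set set \<Rightarrow> bool" where
  "compatible G emb S \<longleftrightarrow>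
     (\<forall>w \<in> lists (inter_edges S). word_val G emb w = \<one>\<^bsub>G\<^esub> \<longrightarrow> (\<forall>s\<in>S. pi_word w s = s))"

fun is_walk :: "'a set set \<Rightarrow> 'a \<Rightarrow> 'a set list \<Rightarrow> 'a \<Rightarrow> bool" where
  "is_walk E s [] t = (s = t)"
| "is_walk E s (e # w) t = (e \<in> E \<and> s \<in> e \<and> is_walk E (swap_edge e s) w t)"

definition walk_words :: "'v set set \<Rightarrow> 'v set set set \<Rightarrow> 'v set \<Rightarrow> 'v set \<Rightarrow> 'v set set list set" where
  "walk_words S \<alpha> s t = {w \<in> lists \<alpha>. is_walk (inter_edges S) s w t}"

definition walks_from :: "'v set set \<Rightarrow> 'v set set set \<Rightarrow> 'v set \<Rightarrow> 'v set set list set" where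
  "walks_from S \<alpha> s = {w \<in> lists \<alpha>. \<exists>t. is_walk (inter_edges S) s w t}"

definition coset_I :: "('g, 'b) monoid_scheme \<Rightarrow> ('v set set \<Rightarrow> 'g) \<Rightarrow> 'v set set
    \<Rightarrow> 'v set set set \<Rightarrow> 'v set \<Rightarrow> 'g \<Rightarrow> 'g set" where
  "coset_I G emb S \<alpha> s g = {g \<otimes>\<^bsub>G\<^esub> word_val G emb w | w. w \<in> walks_from S \<alpha> s}"

definition coset_cycle :: "('g, 'b) monoid_scheme \<Rightarrow> ('v set set \<Rightarrow> 'g) \<Rightarrow> 'v set set \<Rightarrow> nat
    \<Rightarrow> (nat \<Rightarrow> 'g) \<Rightarrow> (nat \<Rightarrow> 'v set set set) \<Rightarrow> (nat \<Rightarrow> 'v set) \<Rightarrow> bool" where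
  "coset_cycle G emb S n g \<alpha> s \<longleftrightarrow> 2 \<le> n \<and>
     (\<forall>i<n. \<alpha> i \<subset> inter_edges S \<and> s i \<in> S \<and> g i \<in> carrier G
       \<and> (\<exists>w \<in> walk_words S (\<alpha> i) (s i) (s (Suc i mod n)).
             g (Suc i mod n) = g i \<otimes>\<^bsub>G\<^esub> word_val G emb w)
       \<and> coset_I G emb S (\<alpha> i \<inter> \<alpha> ((i + n - 1) mod n)) (s i) (g i)
         \<inter> coset_I G emb S (\<alpha> i \<inter> \<alpha> (Suc i mod n)) (s (Suc i mod n)) (g (Suc i mod n)) = {})"

definition N_acyclic :: "('g, 'b) monoid_scheme \<Rightarrow> ('v set set \<Rightarrow> 'g) \<Rightarrow> 'v set set \<Rightarrow> nat \<Rightarrow> bool" where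
  "N_acyclic G emb S N \<longleftrightarrow> \<not> (\<exists>n g \<alpha> s. n \<le> N \<and> coset_cycle G emb S n g \<alpha> s)"

definition cov_X :: "('g, 'b) monoid_scheme \<Rightarrow> 'v set set \<Rightarrow> ('v \<times> 'v set \<times> 'g) set" where
  "cov_X G S = {(v, s, g). s \<in> S \<and> v \<in> s \<and> g \<in> carrier G}"

definition cov_step :: "('g, 'b) monoid_scheme \<Rightarrow> ('v set set \<Rightarrow> 'g) \<Rightarrow> 'v set set
    \<Rightarrow> (('v \<times> 'v set \<times> 'g) \<times> ('v \<times> 'v set \<times> 'g)) set" where
  "cov_step G emb S = {((v, s, g), (v, s', g \<otimes>\<^bsub>G\<^esub> emb e)) | v s s' g e.
      e \<in> inter_edges S \<and> e = {s, s'} \<and> v \<in> s \<inter> s' \<and> g \<in> carrier G}"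

definition cov_rel :: "('g, 'b) monoid_scheme \<Rightarrow> ('v set set \<Rightarrow> 'g) \<Rightarrow> 'v set set
    \<Rightarrow> (('v \<times> 'v set \<times> 'g) \<times> ('v \<times> 'v set \<times> 'g)) set" where
  "cov_rel G emb S = Id_on (cov_X G S) \<union> (cov_step G emb S \<union> (cov_step G emb S)\<inverse>)\<^sup>+"

definition cov_V :: "('g, 'b) monoid_scheme \<Rightarrow> ('v set set \<Rightarrow> 'g) \<Rightarrow> 'v set set
    \<Rightarrow> ('v \<times> 'v set \<times> 'g) set set" where
  "cov_V G emb S = cov_X G S // cov_rel G emb S"

definition cov_edge :: "('g, 'b) monoid_scheme \<Rightarrow> ('v set set \<Rightarrow> 'g) \<Rightarrow> 'v set set
    \<Rightarrow> 'v set \<Rightarrow> 'g \<Rightarrow> ('v \<times> 'v set \<times> 'g) set set" where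
  "cov_edge G emb S s g = {cov_rel G emb S `` {(v, s, g)} | v. v \<in> s}"

definition cov_S :: "('g, 'b) monoid_scheme \<Rightarrow> ('v set set \<Rightarrow> 'g) \<Rightarrow> 'v set set
    \<Rightarrow> ('v \<times> 'v set \<times> 'g) set set set" where
  "cov_S G emb S = {cov_edge G emb S s g | s g. s \<in> S \<and> g \<in> carrier G}"

text \<open>pi([(v,s,g)]) = v (well defined, as shown in the theorem).\<close>
definition cov_pi :: "('v \<times> 'v set \<times> 'g) set \<Rightarrow> 'v" where
  "cov_pi c = fst (SOME x. x \<in> c)"

definition gaif_adj :: "'a set set \<Rightarrow> 'a \<Rightarrow> 'a \<Rightarrow> bool" where
  "gaif_adj H x y \<longleftrightarrow> x \<noteq> y \<and> (\<exists>h\<in>H. x \<in> h \<and> y \<in> h)"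

definition chordless_cycle :: "'a set \<Rightarrow> 'a set set \<Rightarrow> 'a list \<Rightarrow> bool" where
  "chordless_cycle W H c \<longleftrightarrow> distinct c \<and> set c \<subseteq> W \<and>
     (\<forall>i < length c. gaif_adj H (c ! i) (c ! (Suc i mod length c))) \<and>
     (\<forall>i < length c. \<forall>j < length c. i \<noteq> j \<and> j \<noteq> Suc i mod length c \<and> i \<noteq> Suc j mod length c
        \<longrightarrow> \<not> gaif_adj H (c ! i) (c ! j))"

end

theory Submission
  imports Defs
begin

text \<open>The relation \<open>\<approx>\<close> has an explicit form: \<open>(v, s, g) \<approx> (v, t, h)\<close> iff some walk of \<open>\<I>\<close>
  through hyperedges containing \<open>v\<close> leads from \<open>s\<close> to \<open>t\<close> and multiplies \<open>g\<close> into \<open>h\<close>. Since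
  compatibility makes the endpoint of a walk a function of its value in \<open>G\<close>, this gives the
  projection \<open>\<pi>\<close> and shows that a vertex \<open>y\<close> of \<open>[s, g]\<close> lies in \<open>[t, h]\<close> iff such a walk
  through hyperedges containing \<open>\<pi> y\<close> exists. For a finite set \<open>B \<subseteq> [s, g] \<inter> [t, h]\<close> one
  walk can serve all of \<open>B\<close> at once: otherwise the walks for a part of \<open>B\<close> and for one more
  vertex would form a coset cycle of length 2.

  Now take hyperedges \<open>h\<^sub>0, \<dots>, h\<^sub>n\<^sub>-\<^sub>1\<close> in cyclic order with nonempty overlaps
  \<open>B\<^sub>i \<subseteq> h\<^sub>i \<inter> h\<^sub>i\<^sub>+\<^sub>1\<close>. The walks from \<open>h\<^sub>i\<close> to \<open>h\<^sub>i\<^sub>+\<^sub>1\<close> over \<open>\<pi> B\<^sub>i\<close> form a coset cycle of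
  length \<open>n\<close> unless three consecutive overlaps lie in a common hyperedge. A chordless cycle
  \<open>c\<^sub>0 \<dots> c\<^sub>n\<^sub>-\<^sub>1\<close> with \<open>4 \<le> n\<close> gives such a chain with \<open>B\<^sub>i = {c\<^sub>i\<^sub>+\<^sub>1}\<close>, but no hyperedge can
  contain the non-adjacent \<open>c\<^sub>i\<^sub>+\<^sub>1\<close> and \<open>c\<^sub>i\<^sub>+\<^sub>3\<close>. For a clique \<open>A\<close> whose proper subsets are
  covered (induction on \<open>|A|\<close>), hyperedges containing \<open>A - {x\<^sub>i}\<close> for three distinct
  \<open>x\<^sub>0, x\<^sub>1, x\<^sub>2 \<in> A\<close>, with \<open>B\<^sub>i = A - {x\<^sub>i, x\<^sub>i\<^sub>+\<^sub>1}\<close>, give a hyperedge containing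
  \<open>B\<^sub>0 \<union> B\<^sub>1 \<union> B\<^sub>2 = A\<close>.\<close>

section \<open>Walks in the intersection graph\<close>

lemma swap_edge_doubleton: "a \<noteq> b \<Longrightarrow> swap_edge {a, b} a = b"
  unfolding swap_edge_def by (auto intro!: the_equality simp: doubleton_eq_iff)

lemma inter_edgesE:
  assumes "e \<in> inter_edges S"
  obtains a b where "e = {a, b}" "a \<in> S" "b \<in> S" "a \<noteq> b" "a \<inter> b \<noteq> {}"
  using assms by (auto simp: inter_edges_def)

lemma swap_edge_inter_edges:
  assumes "e \<in> inter_edges S" "x \<in> e"
  shows "{x, swap_edge e x} = e" "swap_edge e x \<in> e" "swap_edge e x \<noteq> x" "swap_edge e x \<in> S"
proof -
  obtain a b where e: "e = {a, b}" "a \<in> S" "b \<in> S" "a \<noteq> b"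
    using assms(1) by (rule inter_edgesE)
  consider "x = a" | "x = b" using assms(2) e(1) by blast
  then have "x = a \<and> swap_edge e x = b \<or> x = b \<and> swap_edge e x = a"
  proof cases
    case 1
    then show ?thesis using e swap_edge_doubleton[of a b] by simp
  next
    case 2
    then have "e = {b, a}" using e(1) by (simp add: insert_commute)
    then show ?thesis using 2 e(4) swap_edge_doubleton[of b a] by simp
  qed
  then show "{x, swap_edge e x} = e" "swap_edge e x \<in> e" "swap_edge e x \<noteq> x" "swap_edge e x \<in> S"
    using e(1-4) by fastforce+
qed

lemma swap_edge_swap_edge:
  assumes "e \<in> inter_edges S"
  shows "swap_edge e (swap_edge e x) = x"
proof (cases "x \<in> e")
  case True
  obtain y where y: "swap_edge e x = y" by simp
  have "{y, x} = e" "y \<noteq> x"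
    using swap_edge_inter_edges(1,3)[OF assms True] unfolding y by blast+
  then show ?thesis using swap_edge_doubleton[of y x] y by simp
qed (simp add: swap_edge_def)

lemma is_walk_append:
  "is_walk E s (w @ w') t \<longleftrightarrow> (\<exists>m. is_walk E s w m \<and> is_walk E m w' t)"
  by (induction w arbitrary: s) auto

lemma is_walk_pi_word: "is_walk E s w t \<Longrightarrow> pi_word w s = t"
  unfolding pi_word_def by (induction w arbitrary: s) auto

lemma is_walk_lists: "is_walk E s w t \<Longrightarrow> w \<in> lists E"
  by (induction w arbitrary: s) auto

lemma is_walk_in_S: "is_walk (inter_edges S) s w t \<Longrightarrow> s \<in> S \<Longrightarrow> t \<in> S"
  by (induction w arbitrary: s) (auto dest: swap_edge_inter_edges(4))

lemma is_walk_rev: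
  "is_walk (inter_edges S) s w t \<Longrightarrow> is_walk (inter_edges S) t (rev w) s"
proof (induction w arbitrary: s)
  case (Cons e w)
  then have e: "e \<in> inter_edges S" "s \<in> e" by auto
  then have "is_walk (inter_edges S) (swap_edge e s) [e] s"
    using swap_edge_inter_edges(2)[OF e] swap_edge_swap_edge[OF e(1)] by simp
  with Cons show ?case by (auto simp: is_walk_append)
qed simp

lemma pi_word_rev:
  "w \<in> lists (inter_edges S) \<Longrightarrow> pi_word w (pi_word (rev w) x) = x"
  unfolding pi_word_def by (induction w arbitrary: x) (auto simp: swap_edge_swap_edge)

definition inter_edges_over :: "'v set set \<Rightarrow> 'v set \<Rightarrow> 'v set set set" where
  "inter_edges_over S P = {e \<in> inter_edges S. \<forall>s\<in>e. P \<subseteq> s}"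

lemma inter_edges_over_subset: "inter_edges_over S P \<subseteq> inter_edges S"
  by (auto simp: inter_edges_over_def)

lemma inter_edges_over_antimono: "P \<subseteq> P' \<Longrightarrow> inter_edges_over S P' \<subseteq> inter_edges_over S P"
  by (auto simp: inter_edges_over_def)

lemma inter_edges_over_Un:
  "inter_edges_over S (P \<union> P') = inter_edges_over S P \<inter> inter_edges_over S P'"
  by (auto simp: inter_edges_over_def)

lemma is_walk_over:
  "is_walk (inter_edges S) s w t \<Longrightarrow> w \<in> lists (inter_edges_over S P) \<Longrightarrow> P \<subseteq> s \<Longrightarrow> P \<subseteq> t"
proof (induction w arbitrary: s)
  case (Cons e w)
  then have "P \<subseteq> swap_edge e s"
    using swap_edge_inter_edges(2)[of e S s] by (auto simp: inter_edges_over_def)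
  with Cons show ?case by auto
qed simp

lemma mod_pred_Suc:
  assumes "i < n"
  shows "Suc ((i + n - 1) mod n) mod n = i"
proof -
  have "Suc ((i + n - 1) mod n) mod n = Suc (i + n - 1) mod n"
    by (simp add: mod_Suc_eq)
  also have "Suc (i + n - 1) = i + n"
    using assms by arith
  finally show ?thesis
    using assms by simp
qed

lemma chordless_cycle_skip_one:
  assumes "chordless_cycle W H c" "4 \<le> length c" "i < length c"
  shows "c ! i \<noteq> c ! (Suc (Suc i mod length c) mod length c)"
    and "\<not> gaif_adj H (c ! i) (c ! (Suc (Suc i mod length c) mod length c))"
proof -
  let ?n = "length c" and ?j = "Suc (Suc i mod length c) mod length c"
  have "i \<noteq> ?j" "?j \<noteq> Suc i mod ?n" "i \<noteq> Suc ?j mod ?n" "?j < ?n"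
    using assms(2,3) by (auto simp: mod_Suc)
  then show "c ! i \<noteq> c ! ?j" "\<not> gaif_adj H (c ! i) (c ! ?j)"
    using assms(1,3) unfolding chordless_cycle_def by (auto simp: nth_eq_iff_index_eq)
qed

lemma N_acyclic_mono: "N_acyclic G emb S N \<Longrightarrow> M \<le> N \<Longrightarrow> N_acyclic G emb S M"
  unfolding N_acyclic_def by auto

locale E_group_cover =
  fixes S :: "'v set set" and G :: "'g monoid" (structure) and emb :: "'v set set \<Rightarrow> 'g"
  assumes E_group: "E_group G (inter_edges S) emb"
    and compatible: "compatible G emb S"
begin

sublocale group G
  using E_group by (simp add: E_group_def)

abbreviation "E \<equiv> inter_edges S"
abbreviation "val \<equiv> word_val G emb"
abbreviation "R \<equiv> cov_rel G emb S"
abbreviation "X \<equiv> cov_X G S"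
abbreviation "edge \<equiv> cov_edge G emb S"
abbreviation "edges \<equiv> cov_S G emb S"

lemma emb_closed: "e \<in> E \<Longrightarrow> emb e \<in> carrier G"
  using E_group by (auto simp: E_group_def)

lemma inv_emb: "e \<in> E \<Longrightarrow> inv (emb e) = emb e"
  using E_group by (auto simp: E_group_def intro: inv_equality)

lemma word_val_Nil [simp]: "val [] = \<one>"
  by (simp add: word_val_def)

lemma word_val_Cons [simp]: "val (e # w) = emb e \<otimes> val w"
  by (simp add: word_val_def)

lemma word_val_closed: "w \<in> lists E \<Longrightarrow> val w \<in> carrier G"
  by (induction w) (auto simp: emb_closed)

lemma word_val_append:
  "w \<in> lists E \<Longrightarrow> w' \<in> lists E \<Longrightarrow> val (w @ w') = val w \<otimes> val w'"
  by (induction w) (auto simp: m_assoc emb_closed word_val_closed)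

lemma word_val_rev: "w \<in> lists E \<Longrightarrow> val (rev w) = inv (val w)"
proof (induction w)
  case (Cons e w)
  then have "rev w \<in> lists E" "e \<in> E" "w \<in> lists E"
    by (auto simp: in_lists_conv_set)
  with Cons.IH show ?case
    by (simp add: word_val_append word_val_closed emb_closed inv_emb inv_mult_group)
qed simp

lemma walk_target_unique:
  assumes "s \<in> S" "is_walk E s w t" "is_walk E s w' t'" "val w = val w'"
  shows "t = t'"
proof -
  have w: "w \<in> lists E" "w' \<in> lists E"
    using assms(2,3) by (auto dest: is_walk_lists)
  have "rev w' \<in> lists E"
    using w(2) by (simp add: in_lists_conv_set)
  with w assms(4) have "val (w @ rev w') = \<one>"
    by (simp add: word_val_append word_val_rev word_val_closed)
  moreover have "w @ rev w' \<in> lists E"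
    using w by auto
  ultimately have "pi_word (w @ rev w') s = s"
    using compatible assms(1) unfolding compatible_def by blast
  then have "pi_word (rev w') t = s"
    using is_walk_pi_word[OF assms(2)] by (simp add: pi_word_def)
  then show ?thesis
    using pi_word_rev[OF w(2), of t] is_walk_pi_word[OF assms(3)] by simp
qed

text \<open>\<open>(t, h)\<close> lies in the \<open>\<alpha>\<close>-component of \<open>(s, g)\<close> in the product of \<open>\<I>\<close> with the Cayley
  graph of \<open>G\<close>; \<open>coset_I\<close> is the projection of that component to \<open>G\<close>.\<close>
definition reach :: "'v set set set \<Rightarrow> 'v set \<Rightarrow> 'g \<Rightarrow> 'v set \<Rightarrow> 'g \<Rightarrow> bool" where
  "reach \<alpha> s g t h \<longleftrightarrow> s \<in> S \<and> g \<in> carrier G \<and> (\<exists>w\<in>lists \<alpha>. is_walk E s w t \<and> h = g \<otimes> val w)"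

lemma reach_refl: "s \<in> S \<Longrightarrow> g \<in> carrier G \<Longrightarrow> reach \<alpha> s g s g"
  unfolding reach_def by (auto intro!: bexI[of _ "[]"])

lemma reach_closed:
  assumes "reach \<alpha> s g t h"
  shows "s \<in> S" "g \<in> carrier G" "t \<in> S" "h \<in> carrier G"
proof -
  obtain w where "s \<in> S" "g \<in> carrier G" "is_walk E s w t" "h = g \<otimes> val w"
    using assms unfolding reach_def by blast
  moreover have "val w \<in> carrier G"
    using is_walk_lists[OF \<open>is_walk E s w t\<close>] by (rule word_val_closed)
  ultimately show "s \<in> S" "g \<in> carrier G" "t \<in> S" "h \<in> carrier G"
    using is_walk_in_S by auto
qed

lemma reach_trans:
  assumes "reach \<alpha> s g t h" "reach \<alpha> t h u k"
  shows "reach \<alpha> s g u k"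
proof -
  obtain w w' where w: "w \<in> lists \<alpha>" "is_walk E s w t" "h = g \<otimes> val w"
    and w': "w' \<in> lists \<alpha>" "is_walk E t w' u" "k = h \<otimes> val w'"
    using assms unfolding reach_def by blast
  have "w \<in> lists E" "w' \<in> lists E"
    using w(2) w'(2) by (auto dest: is_walk_lists)
  then have "k = g \<otimes> val (w @ w')"
    using w(3) w'(3) assms(1) by (simp add: reach_def m_assoc word_val_append word_val_closed)
  moreover have "is_walk E s (w @ w') u"
    using w(2) w'(2) by (auto simp: is_walk_append)
  moreover have "w @ w' \<in> lists \<alpha>"
    using w(1) w'(1) by simp
  ultimately show ?thesis
    using reach_closed[OF assms(1)] unfolding reach_def by blast
qed

lemma reach_sym:
  assumes "reach \<alpha> s g t h"
  shows "reach \<alpha> t h s g"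
proof -
  obtain w where w: "w \<in> lists \<alpha>" "is_walk E s w t" "h = g \<otimes> val w"
    using assms unfolding reach_def by blast
  have "w \<in> lists E"
    using w(2) by (rule is_walk_lists)
  then have "g = h \<otimes> val (rev w)"
    using w(3) assms by (simp add: reach_def m_assoc word_val_rev word_val_closed)
  moreover have "rev w \<in> lists \<alpha>"
    using w(1) by (simp add: in_lists_conv_set)
  ultimately show ?thesis
    using is_walk_rev[OF w(2)] reach_closed[OF assms] unfolding reach_def by blast
qed

lemma reach_mono: "reach \<alpha> s g t h \<Longrightarrow> \<alpha> \<subseteq> \<beta> \<Longrightarrow> reach \<beta> s g t h"
  unfolding reach_def by (meson lists_mono subsetD)

lemma reach_inter_edges: "reach \<alpha> s g t h \<Longrightarrow> reach E s g t h"
  unfolding reach_def by (blast dest: is_walk_lists)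

lemma reach_target_unique:
  assumes "reach \<alpha> s g t h" "reach \<beta> s g t' h"
  shows "t = t'"
proof -
  obtain w w' where "is_walk E s w t" "is_walk E s w' t'" "g \<otimes> val w = g \<otimes> val w'"
    using assms unfolding reach_def by auto
  moreover from this have "val w = val w'"
    using reach_closed(2)[OF assms(1)] by (simp add: word_val_closed is_walk_lists)
  ultimately show ?thesis
    using walk_target_unique reach_closed(1)[OF assms(1)] by blast
qed

lemma reach_over:
  "reach (inter_edges_over S P) s g t h \<Longrightarrow> P \<subseteq> s \<Longrightarrow> P \<subseteq> t"
  unfolding reach_def using is_walk_over by blast

lemma coset_I_eq:
  "s \<in> S \<Longrightarrow> g \<in> carrier G \<Longrightarrow> coset_I G emb S \<alpha> s g = {h. \<exists>t. reach \<alpha> s g t h}"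
  unfolding coset_I_def walks_from_def reach_def by blast

lemma walk_words_reach:
  "s \<in> S \<Longrightarrow> g \<in> carrier G \<Longrightarrow>
    (\<exists>w\<in>walk_words S \<alpha> s t. h = g \<otimes> val w) \<longleftrightarrow> reach \<alpha> s g t h"
  unfolding walk_words_def reach_def by blast

section \<open>The covering relation\<close>

definition cov_rel_walks :: "(('v \<times> 'v set \<times> 'g) \<times> ('v \<times> 'v set \<times> 'g)) set" where
  "cov_rel_walks = {((v, s, g), (v, t, h)) | v s g t h.
     v \<in> s \<and> reach (inter_edges_over S {v}) s g t h}"

lemma cov_rel_walks_subset: "cov_rel_walks \<subseteq> X \<times> X"
  unfolding cov_rel_walks_def cov_X_def
  using reach_closed reach_over[of "{_}"] by fastforce

lemma equiv_cov_rel_walks: "equiv X cov_rel_walks"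
proof (rule equivI)
  show "cov_rel_walks \<subseteq> X \<times> X"
    by (rule cov_rel_walks_subset)
  show "refl_on X cov_rel_walks"
    using cov_rel_walks_subset
    by (auto simp: refl_on_def cov_rel_walks_def cov_X_def intro: reach_refl)
  show "sym cov_rel_walks"
    by (auto simp: sym_def cov_rel_walks_def intro: reach_sym dest: reach_over[of "{_}"])
  show "trans cov_rel_walks"
    by (auto simp: trans_def cov_rel_walks_def intro: reach_trans)
qed

lemma cov_step_subset_walks: "cov_step G emb S \<subseteq> cov_rel_walks"
proof
  fix p assume "p \<in> cov_step G emb S"
  then obtain v s s' g e where p: "p = ((v, s, g), (v, s', g \<otimes> emb e))"
    and e: "e \<in> E" "e = {s, s'}" "v \<in> s" "v \<in> s'" "g \<in> carrier G"
    unfolding cov_step_def by blast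
  have s: "s \<in> S" "s \<noteq> s'"
    using e(1,2) by (auto simp: inter_edges_def doubleton_eq_iff)
  have "is_walk E s [e] s'"
    using e(1,2) s(2) swap_edge_doubleton[of s s'] by simp
  moreover have "[e] \<in> lists (inter_edges_over S {v})"
    using e(1-4) by (auto simp: inter_edges_over_def)
  moreover have "g \<otimes> emb e = g \<otimes> val [e]"
    using e(1) by (simp add: emb_closed)
  ultimately have "reach (inter_edges_over S {v}) s g s' (g \<otimes> emb e)"
    using s(1) e(5) unfolding reach_def by blast
  then show "p \<in> cov_rel_walks"
    unfolding p cov_rel_walks_def using e(3) by blast
qed

lemma cov_rel_subset_walks: "R \<subseteq> cov_rel_walks"
proof -
  have "sym cov_rel_walks"
    using equiv_cov_rel_walks by (rule equivE)
  then have "cov_step G emb S \<union> (cov_step G emb S)\<inverse> \<subseteq> cov_rel_walks"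
    using cov_step_subset_walks by (auto dest: symD)
  then have "(cov_step G emb S \<union> (cov_step G emb S)\<inverse>)\<^sup>+ \<subseteq> cov_rel_walks\<^sup>+"
    by (rule trancl_mono_subset)
  also have "\<dots> = cov_rel_walks"
    using equiv_cov_rel_walks by (auto elim: equivE intro: trancl_id)
  finally show ?thesis
    using equiv_cov_rel_walks unfolding cov_rel_def by (auto elim!: equivE simp: refl_on_def)
qed

lemma cov_rel_step_trans:
  "(x, y) \<in> cov_step G emb S \<Longrightarrow> (y, z) \<in> R \<Longrightarrow> (x, z) \<in> R"
  unfolding cov_rel_def by (auto intro: trancl_into_trancl2)

lemma walks_subset_cov_rel: "cov_rel_walks \<subseteq> R"
proof -
  have "((v, s, g), (v, t, g \<otimes> val w)) \<in> R"
    if "v \<in> s" "s \<in> S" "g \<in> carrier G" "w \<in> lists (inter_edges_over S {v})" "is_walk E s w t"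
    for v s g w t
    using that
  proof (induction w arbitrary: s g)
    case Nil
    then show ?case by (auto simp: cov_rel_def cov_X_def)
  next
    case (Cons e w)
    let ?s' = "swap_edge e s"
    have e: "e \<in> E" "s \<in> e" "\<forall>s\<in>e. v \<in> s"
      using Cons.prems by (auto simp: inter_edges_over_def)
    then have s': "{s, ?s'} = e" "?s' \<in> S" "v \<in> ?s'"
      using swap_edge_inter_edges[OF e(1,2)] by auto
    then have "((v, s, g), (v, ?s', g \<otimes> emb e)) \<in> cov_step G emb S"
      unfolding cov_step_def using e Cons.prems by blast
    moreover have "((v, ?s', g \<otimes> emb e), (v, t, (g \<otimes> emb e) \<otimes> val w)) \<in> R"
      using Cons s' e emb_closed by auto
    moreover have "(g \<otimes> emb e) \<otimes> val w = g \<otimes> val (e # w)"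
      using Cons.prems(3,5) e(1) is_walk_lists[of E "?s'" w t]
      by (simp add: m_assoc emb_closed word_val_closed)
    ultimately show ?case
      by (metis cov_rel_step_trans)
  qed
  then show ?thesis
    unfolding cov_rel_walks_def reach_def by blast
qed

lemma cov_rel_eq_walks: "R = cov_rel_walks"
  using cov_rel_subset_walks walks_subset_cov_rel by blast

lemma equiv_cov_rel: "equiv X R"
  using equiv_cov_rel_walks by (simp add: cov_rel_eq_walks)

lemma cov_rel_fst: "(x, y) \<in> R \<Longrightarrow> fst x = fst y"
  by (auto simp: cov_rel_eq_walks cov_rel_walks_def)

lemma cov_pi_class: "x \<in> X \<Longrightarrow> cov_pi (R `` {x}) = fst x"
proof -
  assume "x \<in> X"
  then have "x \<in> R `` {x}"
    by (rule equiv_class_self[OF equiv_cov_rel])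
  then have "(x, SOME y. y \<in> R `` {x}) \<in> R"
    by (metis Image_singleton_iff someI)
  then show ?thesis
    unfolding cov_pi_def by (simp add: cov_rel_fst)
qed

lemma bij_betw_cov_pi_edge:
  assumes "s \<in> S" "g \<in> carrier G"
  shows "bij_betw cov_pi (edge s g) s"
proof -
  have "cov_pi (R `` {(v, s, g)}) = v" if "v \<in> s" for v
    using cov_pi_class[of "(v, s, g)"] that assms by (simp add: cov_X_def)
  then show ?thesis
    unfolding bij_betw_def inj_on_def cov_edge_def by (auto simp: image_def) metis+
qed

lemma cov_SE:
  assumes "h \<in> edges"
  obtains s g where "s \<in> S" "g \<in> carrier G" "h = edge s g"
  using assms unfolding cov_S_def by blast

lemma cov_SI: "s \<in> S \<Longrightarrow> g \<in> carrier G \<Longrightarrow> edge s g \<in> edges"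
  unfolding cov_S_def by blast

lemma mem_cov_edge_iff_reach:
  assumes "y \<in> edge s g" "s \<in> S" "g \<in> carrier G"
  shows "y \<in> edge t h \<longleftrightarrow> reach (inter_edges_over S {cov_pi y}) s g t h"
proof -
  obtain u where u: "u \<in> s" "y = R `` {(u, s, g)}"
    using assms(1) unfolding cov_edge_def by blast
  have X: "(u, s, g) \<in> X"
    using u(1) assms(2,3) by (simp add: cov_X_def)
  then have pi: "cov_pi y = u"
    using u(2) cov_pi_class by simp
  show ?thesis
  proof
    assume "y \<in> edge t h"
    then obtain u' where "y = R `` {(u', t, h)}"
      unfolding cov_edge_def by blast
    then have "((u', t, h), (u, s, g)) \<in> R"
      using u(2) equiv_class_self[OF equiv_cov_rel X] by blast
    then have "((u, s, g), (u', t, h)) \<in> R"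
      using equiv_cov_rel by (blast elim: equivE dest: symD)
    then show "reach (inter_edges_over S {cov_pi y}) s g t h"
      using pi by (simp add: cov_rel_eq_walks cov_rel_walks_def)
  next
    assume reach: "reach (inter_edges_over S {cov_pi y}) s g t h"
    then have "((u, s, g), (u, t, h)) \<in> R"
      using u(1) pi by (auto simp: cov_rel_eq_walks cov_rel_walks_def)
    then have "y = R `` {(u, t, h)}"
      using u(2) equiv_cov_rel by (simp add: equiv_class_eq)
    moreover have "u \<in> t"
      using reach_over[OF reach] pi u(1) by simp
    ultimately show "y \<in> edge t h"
      unfolding cov_edge_def by blast
  qed
qed

lemma subset_cov_edge_reach:
  assumes "B \<subseteq> edge s g" "s \<in> S" "g \<in> carrier G"
    and "reach (inter_edges_over S (cov_pi ` B)) s g t h"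
  shows "B \<subseteq> edge t h"
proof
  fix y assume "y \<in> B"
  then have "inter_edges_over S (cov_pi ` B) \<subseteq> inter_edges_over S {cov_pi y}"
    by (intro inter_edges_over_antimono) auto
  then have "reach (inter_edges_over S {cov_pi y}) s g t h"
    using assms(4) by (rule_tac reach_mono)
  with \<open>y \<in> B\<close> show "y \<in> edge t h"
    using assms(1-3) mem_cov_edge_iff_reach by blast
qed

section \<open>Coset cycles from cyclic chains of hyperedges\<close>

lemma coset_I_meet:
  assumes "reach E s g s' g'" "x \<in> coset_I G emb S \<beta> s g" "x \<in> coset_I G emb S \<beta>' s' g'"
  obtains t where "reach \<beta> s g t x" "reach \<beta>' s' g' t x"
proof -
  obtain t t' where t: "reach \<beta> s g t x" and t': "reach \<beta>' s' g' t' x"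
    using assms reach_closed[OF assms(1)] by (auto simp: coset_I_eq)
  have "reach E s g t' x"
    using reach_trans[OF assms(1) reach_inter_edges[OF t']] .
  then have "t = t'"
    using t by (rule_tac reach_target_unique)
  with t t' show ?thesis
    using that by blast
qed

lemma cosets_meet_reach:
  assumes "reach E s g t h" "coset_I G emb S \<beta> s g \<inter> coset_I G emb S \<beta> t h \<noteq> {}"
  shows "reach \<beta> s g t h"
proof -
  obtain x where "x \<in> coset_I G emb S \<beta> s g" "x \<in> coset_I G emb S \<beta> t h"
    using assms(2) by blast
  then obtain u where "reach \<beta> s g u x" "reach \<beta> t h u x"
    by (rule coset_I_meet[OF assms(1)])
  then show ?thesis
    by (blast intro: reach_trans reach_sym)
qed

lemma cosets_meet_cov_edge:
  assumes "reach E s g s' g'" "B \<subseteq> edge s g" "B' \<subseteq> edge s' g'"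
    and "coset_I G emb S (inter_edges_over S (cov_pi ` B)) s g
      \<inter> coset_I G emb S (inter_edges_over S (cov_pi ` B')) s' g' \<noteq> {}"
  shows "\<exists>h\<in>edges. B \<union> B' \<subseteq> h"
proof -
  obtain x where "x \<in> coset_I G emb S (inter_edges_over S (cov_pi ` B)) s g"
    "x \<in> coset_I G emb S (inter_edges_over S (cov_pi ` B')) s' g'"
    using assms(4) by blast
  then obtain t where t: "reach (inter_edges_over S (cov_pi ` B)) s g t x"
    "reach (inter_edges_over S (cov_pi ` B')) s' g' t x"
    by (rule coset_I_meet[OF assms(1)])
  have "B \<subseteq> edge t x"
    using subset_cov_edge_reach[OF assms(2) reach_closed(1,2)[OF t(1)] t(1)] .
  moreover have "B' \<subseteq> edge t x"
    using subset_cov_edge_reach[OF assms(3) reach_closed(1,2)[OF t(2)] t(2)] .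
  ultimately show ?thesis
    using cov_SI[OF reach_closed(3,4)[OF t(1)]] by blast
qed

lemma coset_cycleI:
  assumes "2 \<le> n"
    and "\<And>i. i < n \<Longrightarrow> \<alpha> i \<subset> E"
    and "\<And>i. i < n \<Longrightarrow> reach (\<alpha> i) (s i) (g i) (s (Suc i mod n)) (g (Suc i mod n))"
    and "\<And>i. i < n \<Longrightarrow> coset_I G emb S (\<alpha> i \<inter> \<alpha> ((i + n - 1) mod n)) (s i) (g i)
        \<inter> coset_I G emb S (\<alpha> i \<inter> \<alpha> (Suc i mod n)) (s (Suc i mod n)) (g (Suc i mod n)) = {}"
  shows "coset_cycle G emb S n g \<alpha> s"
proof -
  have "s i \<in> S \<and> g i \<in> carrier G \<and>
      (\<exists>w\<in>walk_words S (\<alpha> i) (s i) (s (Suc i mod n)). g (Suc i mod n) = g i \<otimes> val w)"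
    if "i < n" for i
  proof -
    have r: "reach (\<alpha> i) (s i) (g i) (s (Suc i mod n)) (g (Suc i mod n))"
      using assms(3)[OF that] .
    with walk_words_reach[OF reach_closed(1,2)[OF r]] reach_closed(1,2)[OF r]
    show ?thesis by blast
  qed
  with assms show ?thesis
    unfolding coset_cycle_def by blast
qed

lemma coset_cycle_2I:
  assumes "\<alpha> \<subset> E" "\<beta> \<subset> E" "reach \<alpha> s g t h" "reach \<beta> s g t h"
    and "coset_I G emb S (\<alpha> \<inter> \<beta>) s g \<inter> coset_I G emb S (\<alpha> \<inter> \<beta>) t h = {}"
  shows "coset_cycle G emb S 2 (\<lambda>i. if i = 0 then g else h) (\<lambda>i. if i = 0 then \<alpha> else \<beta>)
    (\<lambda>i. if i = 0 then s else t)"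
proof (rule coset_cycleI, goal_cases)
  case (2 i)
  then show ?case using assms(1,2) by simp
next
  case (3 i)
  then consider "i = 0" | "i = 1" by linarith
  then show ?case using assms(3,4) reach_sym by cases simp_all
next
  case (4 i)
  then consider "i = 0" | "i = 1" by linarith
  then show ?case using assms(5) by cases (simp_all add: Int_commute)
qed simp

lemma subset_cov_edges_reach:
  assumes "N_acyclic G emb S 2" "finite B" "B \<noteq> {}"
    and "B \<subseteq> edge s g" "B \<subseteq> edge t h" "s \<in> S" "g \<in> carrier G"
  shows "reach (inter_edges_over S (cov_pi ` B)) s g t h"
  using assms(2-5)
proof (induction B rule: finite_ne_induct)
  case (singleton y)
  then show ?case
    using mem_cov_edge_iff_reach[of y s g t h] assms(6,7) by simp
next
  case (insert z B)
  let ?\<alpha> = "inter_edges_over S (cov_pi ` B)"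
  let ?\<beta> = "inter_edges_over S {cov_pi z}"
  have split: "inter_edges_over S (cov_pi ` insert z B) = ?\<alpha> \<inter> ?\<beta>"
    using inter_edges_over_Un[of S "{cov_pi z}" "cov_pi ` B"] by (simp add: Int_commute)
  have \<alpha>: "reach ?\<alpha> s g t h"
    using insert by simp
  have \<beta>: "reach ?\<beta> s g t h"
    using insert.prems assms(6,7) mem_cov_edge_iff_reach[of z s g t h] by simp
  show ?case
  proof (cases "?\<alpha> \<subset> E \<and> ?\<beta> \<subset> E")
    case True
    show ?thesis
    proof (rule ccontr)
      assume "\<not> ?thesis"
      then have "coset_I G emb S (?\<alpha> \<inter> ?\<beta>) s g \<inter> coset_I G emb S (?\<alpha> \<inter> ?\<beta>) t h = {}"
        using cosets_meet_reach[OF reach_inter_edges[OF \<alpha>]] split by metis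
      then have "coset_cycle G emb S 2 (\<lambda>i. if i = 0 then g else h)
          (\<lambda>i. if i = 0 then ?\<alpha> else ?\<beta>) (\<lambda>i. if i = 0 then s else t)"
        using True \<alpha> \<beta> by (intro coset_cycle_2I) auto
      then show False
        using assms(1) unfolding N_acyclic_def by blast
    qed
  next
    case False
    then have "?\<alpha> = E \<or> ?\<beta> = E"
      using inter_edges_over_subset by blast
    then have "inter_edges_over S (cov_pi ` insert z B) = ?\<beta> \<or>
        inter_edges_over S (cov_pi ` insert z B) = ?\<alpha>"
      using split inter_edges_over_subset by blast
    then show ?thesis
      using \<alpha> \<beta> by metis
  qed
qed

lemma cyclic_chain_coset_cycle:
  assumes "2 \<le> n"
    and B: "\<And>i. i < n \<Longrightarrow> B i \<subseteq> edge (s i) (g i) \<and> B i \<subseteq> edge (s (Suc i mod n)) (g (Suc i mod n))"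
    and reach: "\<And>i. i < n \<Longrightarrow>
      reach (inter_edges_over S (cov_pi ` B i)) (s i) (g i) (s (Suc i mod n)) (g (Suc i mod n))"
    and uncovered: "\<And>i h. i < n \<Longrightarrow> h \<in> edges \<Longrightarrow>
      \<not> B i \<union> B (Suc i mod n) \<union> B (Suc (Suc i mod n) mod n) \<subseteq> h"
  shows "coset_cycle G emb S n g (\<lambda>i. inter_edges_over S (cov_pi ` B i)) s"
proof (rule coset_cycleI[OF assms(1)], goal_cases)
  case (1 i)
  define j where "j = Suc i mod n"
  define k where "k = Suc j mod n"
  have jk: "j < n" "k < n"
    using 1 unfolding j_def k_def by auto
  have "inter_edges_over S (cov_pi ` B i) \<noteq> E"
  proof
    assume "inter_edges_over S (cov_pi ` B i) = E"
    then have r: "reach (inter_edges_over S (cov_pi ` B i)) (s j) (g j) (s k) (g k)"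
      using reach_inter_edges[OF reach[OF jk(1)]] unfolding k_def by simp
    have "B i \<subseteq> edge (s j) (g j)"
      using B[OF 1] unfolding j_def by blast
    then have "B i \<subseteq> edge (s k) (g k)"
      using subset_cov_edge_reach[OF _ reach_closed(1,2)[OF r] r] by blast
    moreover have "B j \<union> B k \<subseteq> edge (s k) (g k)"
      using B[OF jk(1)] B[OF jk(2)] unfolding k_def by blast
    moreover have "edge (s k) (g k) \<in> edges"
      using cov_SI reach_closed(1,2)[OF reach[OF jk(2)]] by blast
    ultimately show False
      using uncovered[OF 1] unfolding j_def k_def by blast
  qed
  then show ?case
    using inter_edges_over_subset by blast
next
  case (2 i)
  then show ?case by (rule reach)
next
  case (3 i)
  define j where "j = Suc i mod n"
  define k where "k = (i + n - 1) mod n"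
  have k: "k < n" "Suc k mod n = i"
    using 3 mod_pred_Suc[OF 3] unfolding k_def by auto
  have j: "j < n"
    using 3 unfolding j_def by simp
  have "B k \<union> B i \<subseteq> edge (s i) (g i)"
    using B[OF 3] B[OF k(1)] unfolding k(2) by blast
  moreover have "B i \<union> B j \<subseteq> edge (s j) (g j)"
    using B[OF 3] B[OF j] unfolding j_def by blast
  moreover have "reach E (s i) (g i) (s j) (g j)"
    using reach_inter_edges[OF reach[OF 3]] unfolding j_def .
  moreover have "\<not> (\<exists>h\<in>edges. (B k \<union> B i) \<union> (B i \<union> B j) \<subseteq> h)"
    using uncovered[OF k(1)] k(2) unfolding j_def by (metis Un_absorb Un_assoc Un_left_commute)
  ultimately have "coset_I G emb S (inter_edges_over S (cov_pi ` (B k \<union> B i))) (s i) (g i)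
      \<inter> coset_I G emb S (inter_edges_over S (cov_pi ` (B i \<union> B j))) (s j) (g j) = {}"
    using cosets_meet_cov_edge[of "s i" "g i" "s j" "g j" "B k \<union> B i" "B i \<union> B j"] by blast
  moreover have "inter_edges_over S (cov_pi ` (B k \<union> B i))
      = inter_edges_over S (cov_pi ` B i) \<inter> inter_edges_over S (cov_pi ` B k)"
    "inter_edges_over S (cov_pi ` (B i \<union> B j))
      = inter_edges_over S (cov_pi ` B i) \<inter> inter_edges_over S (cov_pi ` B j)"
    by (simp_all add: image_Un inter_edges_over_Un Int_commute)
  ultimately show ?case
    unfolding j_def k_def by simp
qed

lemma cyclic_chain_covered:
  assumes "N_acyclic G emb S n" "2 \<le> n"
    and "\<And>i. i < n \<Longrightarrow> H i \<in> edges"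
    and "\<And>i. i < n \<Longrightarrow> finite (B i) \<and> B i \<noteq> {} \<and> B i \<subseteq> H i \<inter> H (Suc i mod n)"
  shows "\<exists>i<n. \<exists>h\<in>edges. B i \<union> B (Suc i mod n) \<union> B (Suc (Suc i mod n) mod n) \<subseteq> h"
proof (rule ccontr)
  assume uncovered: "\<not> ?thesis"
  have "\<forall>i<n. \<exists>s g. s \<in> S \<and> g \<in> carrier G \<and> H i = edge s g"
    using assms(3) by (meson cov_SE)
  then obtain s g where sg: "\<And>i. i < n \<Longrightarrow> s i \<in> S \<and> g i \<in> carrier G \<and> H i = edge (s i) (g i)"
    by metis
  have B: "B i \<subseteq> edge (s i) (g i) \<and> B i \<subseteq> edge (s (Suc i mod n)) (g (Suc i mod n))" if "i < n" for i
    using assms(4)[OF that] sg[OF that] sg[of "Suc i mod n"] that by auto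
  have "N_acyclic G emb S 2"
    using assms(1,2) by (rule N_acyclic_mono)
  then have "reach (inter_edges_over S (cov_pi ` B i)) (s i) (g i) (s (Suc i mod n)) (g (Suc i mod n))"
    if "i < n" for i
    using assms(4)[OF that] B[OF that] sg[OF that] by (blast intro: subset_cov_edges_reach)
  then have "coset_cycle G emb S n g (\<lambda>i. inter_edges_over S (cov_pi ` B i)) s"
    using uncovered assms(2) B by (intro cyclic_chain_coset_cycle) auto
  then show False
    using assms(1) unfolding N_acyclic_def by blast
qed

section \<open>Chordality and conformality of the cover\<close>

lemma no_chordless_cycle:
  assumes "N_acyclic G emb S (length c)" "4 \<le> length c" "chordless_cycle W edges c"
  shows False
proof -
  define n where "n = length c"
  have "\<forall>i<n. \<exists>h\<in>edges. c ! i \<in> h \<and> c ! (Suc i mod n) \<in> h"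
    using assms(3) unfolding chordless_cycle_def gaif_adj_def n_def by meson
  then obtain H where H: "\<And>i. i < n \<Longrightarrow> H i \<in> edges \<and> c ! i \<in> H i \<and> c ! (Suc i mod n) \<in> H i"
    by metis
  have "4 \<le> n"
    unfolding n_def by (rule assms(2))
  then have n: "2 \<le> n" "\<And>i. Suc i mod n < n"
    by simp_all
  have "finite {c ! (Suc i mod n)} \<and> {c ! (Suc i mod n)} \<noteq> {}
      \<and> {c ! (Suc i mod n)} \<subseteq> H i \<inter> H (Suc i mod n)" if "i < n" for i
    using H[OF that] H[OF n(2)] by auto
  then obtain i h where "i < n" "h \<in> edges"
    "{c ! (Suc i mod n)} \<union> {c ! (Suc (Suc i mod n) mod n)}
      \<union> {c ! (Suc (Suc (Suc i mod n) mod n) mod n)} \<subseteq> h"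
    using cyclic_chain_covered[of n H "\<lambda>i. {c ! (Suc i mod n)}"] assms(1) n(1) H
    unfolding n_def by auto
  moreover have "Suc i mod n < length c"
    using n(2) unfolding n_def .
  ultimately show False
    using chordless_cycle_skip_one[OF assms(3,2)] unfolding gaif_adj_def n_def by auto
qed

lemma cov_V_covered:
  assumes "a \<in> cov_V G emb S"
  shows "\<exists>h\<in>edges. a \<in> h"
proof -
  obtain v s g where "a = R `` {(v, s, g)}" "s \<in> S" "v \<in> s" "g \<in> carrier G"
    using assms unfolding cov_V_def cov_X_def by (auto elim!: quotientE)
  then have "a \<in> edge s g"
    unfolding cov_edge_def by blast
  then show ?thesis
    using cov_SI \<open>s \<in> S\<close> \<open>g \<in> carrier G\<close> by blast
qed

lemma clique_covered_step:
  assumes "N_acyclic G emb S 3" "3 \<le> card A"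
    and "\<And>a. a \<in> A \<Longrightarrow> \<exists>h\<in>edges. A - {a} \<subseteq> h"
  shows "\<exists>h\<in>edges. A \<subseteq> h"
proof -
  obtain A' where "A' \<subseteq> A" "card A' = 3"
    using obtain_subset_with_card_n[OF assms(2)] by metis
  then obtain a b c where abc: "a \<in> A" "b \<in> A" "c \<in> A" "a \<noteq> b" "b \<noteq> c" "a \<noteq> c"
    unfolding card_3_iff by auto
  have fin: "finite A"
    using assms(2) card.infinite by fastforce
  define x where "x = (!) [a, b, c]"
  have three: "i < 3 \<longleftrightarrow> i = 0 \<or> i = 1 \<or> i = 2" for i :: nat
    by auto
  have "\<forall>i<3. \<exists>h\<in>edges. A - {x i} \<subseteq> h"
    using assms(3) abc unfolding three x_def by auto
  then obtain H where H: "\<And>i. i < 3 \<Longrightarrow> H i \<in> edges \<and> A - {x i} \<subseteq> H i"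
    by metis
  define B where "B i = A - {x i, x (Suc i mod 3)}" for i
  have "B i \<noteq> {}" if "i < 3" for i
    using that abc unfolding three B_def x_def by auto
  then have "finite (B i) \<and> B i \<noteq> {} \<and> B i \<subseteq> H i \<inter> H (Suc i mod 3)" if "i < 3" for i
    using that H[OF that] H[of "Suc i mod 3"] fin unfolding B_def by auto
  then obtain i h where "i < 3" "h \<in> edges" "B i \<union> B (Suc i mod 3) \<union> B (Suc (Suc i mod 3) mod 3) \<subseteq> h"
    using cyclic_chain_covered[of 3 H B] assms(1) H by auto
  moreover have "B i \<union> B (Suc i mod 3) \<union> B (Suc (Suc i mod 3) mod 3) = A"
    using \<open>i < 3\<close> abc unfolding three B_def x_def by auto
  ultimately show ?thesis
    by auto
qed

lemma clique_covered:
  assumes "N_acyclic G emb S N" "3 \<le> N"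
    and "A \<subseteq> cov_V G emb S" "finite A" "A \<noteq> {}" "card A \<le> N"
    and "\<forall>x\<in>A. \<forall>y\<in>A. x \<noteq> y \<longrightarrow> gaif_adj edges x y"
  shows "\<exists>h\<in>edges. A \<subseteq> h"
  using assms(3-7)
proof (induction "card A" arbitrary: A rule: less_induct)
  case less
  have "card A \<noteq> 0"
    using less.prems(2,3) by simp
  then consider "card A = 1" | "card A = 2" | "3 \<le> card A"
    by arith
  then show ?case
  proof cases
    case 1
    then obtain a where "A = {a}"
      by (rule card_1_singletonE)
    then show ?thesis
      using cov_V_covered less.prems(1) by blast
  next
    case 2
    then obtain a b where "A = {a, b}" "a \<noteq> b"
      by (auto simp: card_2_iff)
    then show ?thesis
      using less.prems(5) unfolding gaif_adj_def by auto
  next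
    case 3
    have "N_acyclic G emb S 3"
      using assms(1,2) by (rule N_acyclic_mono)
    moreover have "\<exists>h\<in>edges. A - {a} \<subseteq> h" if "a \<in> A" for a
    proof -
      have "card (A - {a}) = card A - 1"
        using that less.prems(2) by simp
      then have "card (A - {a}) < card A" "card (A - {a}) \<noteq> 0"
        using 3 by linarith+
      moreover from this(2) have "A - {a} \<noteq> {}"
        by (metis card.empty)
      ultimately show ?thesis
        using less.prems by (intro less.hyps) auto
    qed
    ultimately show ?thesis
      using clique_covered_step 3 by blast
  qed
qed

end

theorem mainTheorem12:
  fixes V :: "'v set" and S :: "'v set set" and G :: "'g monoid"
    and emb :: "'v set set \<Rightarrow> 'g" and N :: nat
  assumes "finite V" and "S \<subseteq> Pow V"
    and "E_group G (inter_edges S) emb"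
    and "compatible G emb S"
  shows "(\<forall>x y. (x, y) \<in> cov_rel G emb S \<longrightarrow> fst x = fst y)
    \<and> (\<forall>s\<in>S. \<forall>g\<in>carrier G. bij_betw cov_pi (cov_edge G emb S s g) s)
    \<and> (3 \<le> N \<and> N_acyclic G emb S N \<longrightarrow>
         (\<forall>c. chordless_cycle (cov_V G emb S) (cov_S G emb S) c \<and> 4 \<le> length c \<and> length c \<le> N
              \<longrightarrow> False)
       \<and> (\<forall>A. A \<subseteq> cov_V G emb S \<and> finite A \<and> A \<noteq> {} \<and> card A \<le> N
              \<and> (\<forall>x\<in>A. \<forall>y\<in>A. x \<noteq> y \<longrightarrow> gaif_adj (cov_S G emb S) x y)
              \<longrightarrow> (\<exists>h\<in>cov_S G emb S. A \<subseteq> h)))"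
proof (intro conjI allI impI ballI)
  interpret E_group_cover S G emb
    using assms(3,4) by unfold_locales
  show "fst x = fst y" if "(x, y) \<in> cov_rel G emb S" for x y
    using that by (rule cov_rel_fst)
  show "bij_betw cov_pi (cov_edge G emb S s g) s" if "s \<in> S" "g \<in> carrier G" for s g
    using that by (rule bij_betw_cov_pi_edge)
  assume N: "3 \<le> N \<and> N_acyclic G emb S N"
  show False
    if "chordless_cycle (cov_V G emb S) (cov_S G emb S) c \<and> 4 \<le> length c \<and> length c \<le> N" for c
    using no_chordless_cycle[of c] N_acyclic_mono[where N = N and M = "length c"] N that by blast
  show "\<exists>h\<in>cov_S G emb S. A \<subseteq> h"
    if "A \<subseteq> cov_V G emb S \<and> finite A \<and> A \<noteq> {} \<and> card A \<le> N
      \<and> (\<forall>x\<in>A. \<forall>y\<in>A. x \<noteq> y \<longrightarrow> gaif_adj (cov_S G emb S) x y)" for A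
    using clique_covered[of N A] N that by blast
qed

end
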